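(* Let $2\le k_1<\dots<k_m\le n$ ($m\ge1$), $1\le i_{k_j}\le k_j-1$, with $M:=\sum_{j=1}^m i_{k_j}\le k_1$. Let $\pi'=t_{k_1}^{i_{k_1}}\cdots t_{k_m}^{i_{k_m}}\in S_n$, $\pi^\circ$ the same word in $D_n$, and $\pi=w_L\cdot\pi^\circ$ with $1\le L\le n-1$. Then: (a) if $L<M$, $\ell(\pi)=2L+\ell(\pi')$; (b) if $L=M<k_1$, $\ell(\pi)=\ell(\pi')$; (c) if $M<L<k_1$, $\ell(\pi)=2(L-M)+\ell(\pi')$; (d) if $k_r\le L<k_{r+1}$ for some $1\le r\le m-1$, $\ell(\pi)=2\big(L-\sum_{j=r+1}^m i_{k_j}\big)+\ell(\pi')$; (e) if $L\ge k_m$, $\ell(\pi)=2L+\ell(\pi')$.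
   Context: $D_n$ ($n\ge2$) is the Coxeter group with generators $s_{1'},s_1,\dots,s_{n-1}$ and relations $s^2=1$, $(s_i s_{i+1})^3=1$, $(s_is_j)^2=1$ for $|i-j|\ge 2$, $(s_{1'}s_2)^3=1$, $(s_{1'}s_i)^2=1$ for $i\ne 2$; $S_n$ has Coxeter generators $s_i=(i,i+1)$. In both groups $t_k=s_1\cdots s_{k-1}$; in $D_n$, $w_L=s_L s_{L-1}\cdots s_2 s_1 s_{1'} s_2\cdots s_L$. $\ell(\pi)$ is Coxeter length in $D_n$ with respect to $\{s_{1'},s_1,\dots,s_{n-1}\}$, and $\ell(\pi')$ is Coxeter length in $S_n$. (The hypothesis $M\le k_1$ says $\pi'$ is a standard OGS elementary element with major index $M$.) *)

theory Defs
  imports "HOL-Combinatorics.Transposition"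
begin

text \<open>Generators of D_n are encoded as natural numbers: 0 stands for s_{1'} and
  i (1 \<le> i \<le> n-1) stands for s_i.\<close>

definition relatorsD :: "nat \<Rightarrow> nat list set" where
  "relatorsD n =
     {[s, s] | s. s < n}
   \<union> {concat (replicate 3 [i, i+1]) | i. 1 \<le> i \<and> i + 1 \<le> n - 1}
   \<union> {concat (replicate 2 [i, j]) | i j. 1 \<le> i \<and> j \<le> n - 1 \<and> i + 2 \<le> j}
   \<union> {concat (replicate 3 [0, 2]) | x::unit. 2 \<le> n - 1}
   \<union> {concat (replicate 2 [0, i]) | i. 1 \<le> i \<and> i \<le> n - 1 \<and> i \<noteq> 2}"

inductive word_step :: "nat list set \<Rightarrow> nat list \<Rightarrow> nat list \<Rightarrow> bool" for R where
  ins: "r \<in> R \<Longrightarrow> word_step R (u @ v) (u @ r @ v)"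
| del: "r \<in> R \<Longrightarrow> word_step R (u @ r @ v) (u @ v)"

definition word_equiv :: "nat list set \<Rightarrow> nat list \<Rightarrow> nat list \<Rightarrow> bool" where
  "word_equiv R = (word_step R)\<^sup>*\<^sup>*"

definition lengthD :: "nat \<Rightarrow> nat list \<Rightarrow> nat" where
  "lengthD n w = (LEAST k. \<exists>v. set v \<subseteq> {..<n} \<and> length v = k \<and> word_equiv (relatorsD n) v w)"

definition evalS :: "nat list \<Rightarrow> (nat \<Rightarrow> nat)" where
  "evalS w = foldr (\<lambda>i p. transpose i (Suc i) \<circ> p) w id"

definition lengthS :: "nat \<Rightarrow> (nat \<Rightarrow> nat) \<Rightarrow> nat" where
  "lengthS n p = (LEAST k. \<exists>v. set v \<subseteq> {1..n-1} \<and> length v = k \<and> evalS v = p)"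

definition t_word :: "nat \<Rightarrow> nat list" where
  "t_word k = [1..<k]"

definition wL_word :: "nat \<Rightarrow> nat list" where
  "wL_word L = rev [1..<Suc L] @ [0] @ [2..<Suc L]"

definition ogs_word :: "nat \<Rightarrow> (nat \<Rightarrow> nat) \<Rightarrow> (nat \<Rightarrow> nat) \<Rightarrow> nat list" where
  "ogs_word m k i = concat (map (\<lambda>j. concat (replicate (i j) (t_word (k j)))) [1..<Suc m])"

end

theory Submission
  imports Defs
begin

text \<open>D_n acts on integer vectors by signed permutations: s_i swaps the entries i and i+1, and
  s_{1'} swaps the first two entries and negates both. Each generator changes the number of
  D-type inversions (pairs a < b with x_b < x_a, or with x_a + x_b < 0) by exactly one, and an
  exchange argument using only the Coxeter relations shows that every word is congruent to one of
  exactly that length; so Coxeter length in D_n, and in S_n, is an inversion count. The element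
  w_L negates the values 1 and L+1, so pi differs from pi' only by these two signs, which adds two
  inversions for every value u \<le> L standing to the left of L+1 in pi'. The inverse of pi' is
  explicit: cutting 1..M into consecutive blocks of lengths i_{k_1}, ..., i_{k_m}, it shifts the
  j-th block by k_j - M, and it lowers each y > M by the sum of the i_{k_j} with k_j \<ge> y.
  Comparing these values with that of L+1 gives the five cases.\<close>

section \<open>Words modulo relators\<close>

lemma word_equiv_refl: "word_equiv R w w"
  by (simp add: word_equiv_def)

lemma word_equiv_trans: "word_equiv R u v \<Longrightarrow> word_equiv R v w \<Longrightarrow> word_equiv R u w"
  unfolding word_equiv_def by simp

lemma word_step_sym: "word_step R u v \<Longrightarrow> word_step R v u"
  by (induction rule: word_step.induct) (auto intro: word_step.intros)

lemma word_equiv_sym: "word_equiv R u v \<Longrightarrow> word_equiv R v u"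
  unfolding word_equiv_def
  by (induction rule: rtranclp_induct) (auto intro: converse_rtranclp_into_rtranclp word_step_sym)

lemma word_step_append_cong: "word_step R u v \<Longrightarrow> word_step R (p @ u @ q) (p @ v @ q)"
proof (induction rule: word_step.induct)
  case (ins r u v)
  then show ?case using word_step.ins[of r R "p @ u" "v @ q"] by simp
next
  case (del r u v)
  then show ?case using word_step.del[of r R "p @ u" "v @ q"] by simp
qed

lemma word_equiv_append_cong: "word_equiv R u v \<Longrightarrow> word_equiv R (p @ u @ q) (p @ v @ q)"
  unfolding word_equiv_def
  by (induction rule: rtranclp_induct)
    (auto intro: rtranclp.rtrancl_into_rtrancl word_step_append_cong)

lemma word_equiv_snoc_cong: "word_equiv R u v \<Longrightarrow> word_equiv R (u @ q) (v @ q)"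
  using word_equiv_append_cong[of R u v "[]" q] by simp

lemma word_equiv_prefix_cong: "word_equiv R u v \<Longrightarrow> word_equiv R (p @ u) (p @ v)"
  using word_equiv_append_cong[of R u v p "[]"] by simp

lemma word_equiv_step: "word_step R u v \<Longrightarrow> word_equiv R u v"
  unfolding word_equiv_def by simp

lemma word_equiv_cancel: "[s, s] \<in> R \<Longrightarrow> word_equiv R (u @ [s, s]) u"
  using word_equiv_step[OF word_step.del[of "[s, s]" R u "[]"]] by simp

lemma word_equiv_commute:
  assumes "[a, b, a, b] \<in> R" "[a, a] \<in> R" "[b, b] \<in> R"
  shows "word_equiv R [b, a] [a, b]"
proof -
  have "word_step R [b, a] [a, b, a, b, b, a]"
    using word_step.ins[OF assms(1), of "[]" "[b, a]"] by simp
  moreover have "word_step R [a, b, a, b, b, a] [a, b, a, a]"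
    using word_step.del[OF assms(3), of "[a, b, a]" "[a]"] by simp
  moreover have "word_step R [a, b, a, a] [a, b]"
    using word_step.del[OF assms(2), of "[a, b]" "[]"] by simp
  ultimately show ?thesis by (meson word_equiv_step word_equiv_trans)
qed

lemma word_equiv_braid:
  assumes "[a, b, a, b, a, b] \<in> R" "[a, a] \<in> R" "[b, b] \<in> R"
  shows "word_equiv R [b, a, b] [a, b, a]"
proof -
  have "word_step R [b, a, b] [a, b, a, b, a, b, b, a, b]"
    using word_step.ins[OF assms(1), of "[]" "[b, a, b]"] by simp
  moreover have "word_step R [a, b, a, b, a, b, b, a, b] [a, b, a, b, a, a, b]"
    using word_step.del[OF assms(3), of "[a, b, a, b, a]" "[a, b]"] by simp
  moreover have "word_step R [a, b, a, b, a, a, b] [a, b, a, b, b]"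
    using word_step.del[OF assms(2), of "[a, b, a, b]" "[b]"] by simp
  moreover have "word_step R [a, b, a, b, b] [a, b, a]"
    using word_step.del[OF assms(3), of "[a, b, a]" "[]"] by simp
  ultimately show ?thesis by (meson word_equiv_step word_equiv_trans)
qed

definition dynkin_adjacent :: "nat \<Rightarrow> nat \<Rightarrow> bool" where
  "dynkin_adjacent s t \<longleftrightarrow>
     (1 \<le> s \<and> t = Suc s) \<or> (1 \<le> t \<and> s = Suc t) \<or> (s = 0 \<and> t = 2) \<or> (s = 2 \<and> t = 0)"

lemma relatorsD_square: "s < n \<Longrightarrow> [s, s] \<in> relatorsD n"
  unfolding relatorsD_def by blast

lemma relatorsD_commute:
  assumes "s < n" "t < n" "s \<noteq> t" "\<not> dynkin_adjacent s t"
  shows "[s, t, s, t] \<in> relatorsD n \<or> [t, s, t, s] \<in> relatorsD n"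
proof -
  consider "s = 0" "1 \<le> t" "t \<noteq> 2" | "t = 0" "1 \<le> s" "s \<noteq> 2"
    | "1 \<le> s" "s + 2 \<le> t" | "1 \<le> t" "t + 2 \<le> s"
    using assms unfolding dynkin_adjacent_def by linarith
  then show ?thesis
    by cases (use assms in \<open>auto simp: relatorsD_def numeral_2_eq_2\<close>)
qed

lemma relatorsD_braid:
  assumes "s < n" "t < n" "dynkin_adjacent s t"
  shows "[s, t, s, t, s, t] \<in> relatorsD n \<or> [t, s, t, s, t, s] \<in> relatorsD n"
  using assms unfolding dynkin_adjacent_def relatorsD_def
  by (auto simp: numeral_3_eq_3 numeral_2_eq_2)

lemma word_equivD_commute:
  assumes "s < n" "t < n" "s \<noteq> t" "\<not> dynkin_adjacent s t"
  shows "word_equiv (relatorsD n) [s, t] [t, s]"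
  using relatorsD_commute[OF assms] word_equiv_commute[of s t] word_equiv_commute[of t s]
    relatorsD_square assms
  by (meson word_equiv_sym)

lemma word_equivD_braid:
  assumes "s < n" "t < n" "dynkin_adjacent s t"
  shows "word_equiv (relatorsD n) [s, t, s] [t, s, t]"
  using relatorsD_braid[OF assms] word_equiv_braid[of s t] word_equiv_braid[of t s]
    relatorsD_square assms
  by (meson word_equiv_sym)

section \<open>Signed permutations and D-type inversions\<close>

definition gen_act :: "nat \<Rightarrow> (nat \<Rightarrow> int) \<Rightarrow> nat \<Rightarrow> int" where
  "gen_act s x = (if s = 0 then x(1 := - x 2, 2 := - x 1) else x \<circ> transpose s (Suc s))"

definition evalD :: "nat list \<Rightarrow> nat \<Rightarrow> int" where
  "evalD w = foldl (\<lambda>x s. gen_act s x) int w"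

lemma evalD_Nil: "evalD [] = int"
  by (simp add: evalD_def)

lemma evalD_snoc: "evalD (w @ [s]) = gen_act s (evalD w)"
  by (simp add: evalD_def)

lemma gen_act_gen_act [simp]: "gen_act s (gen_act s x) = x"
  by (auto simp: gen_act_def fun_eq_iff)

lemma foldl_gen_act_relatorsD: "r \<in> relatorsD n \<Longrightarrow> foldl (\<lambda>x s. gen_act s x) x r = x"
  unfolding relatorsD_def
  by (auto simp: numeral_3_eq_3 numeral_2_eq_2 gen_act_def fun_eq_iff transpose_def)

lemma evalD_word_step: "word_step (relatorsD n) u v \<Longrightarrow> evalD u = evalD v"
  by (induction rule: word_step.induct) (simp_all add: evalD_def foldl_gen_act_relatorsD)

lemma evalD_word_equiv: "word_equiv (relatorsD n) u v \<Longrightarrow> evalD u = evalD v"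
  unfolding word_equiv_def by (induction rule: rtranclp_induct) (auto dest: evalD_word_step)

definition sign_injective :: "nat \<Rightarrow> (nat \<Rightarrow> int) \<Rightarrow> bool" where
  "sign_injective n x \<longleftrightarrow> (\<forall>a\<in>{1..n}. \<forall>b\<in>{1..n}. a \<noteq> b \<longrightarrow> x a \<noteq> x b \<and> x a \<noteq> - x b)"

lemma sign_injective_gen_act:
  assumes "sign_injective n x" "s < n" "2 \<le> n"
  shows "sign_injective n (gen_act s x)"
proof (cases "s = 0")
  case True
  have "x a \<noteq> x b \<and> x a \<noteq> - x b \<and> - x a \<noteq> x b \<and> - x a \<noteq> - x b"
    if "a \<in> {1..n}" "b \<in> {1..n}" "a \<noteq> b" for a b
    using assms(1) that unfolding sign_injective_def by (metis minus_minus neg_equal_iff_equal)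
  moreover have "1 \<in> {1..n}" "2 \<in> {1..n}" using assms by auto
  ultimately show ?thesis using True unfolding sign_injective_def gen_act_def by auto
next
  case False
  have "transpose s (Suc s) a \<in> {1..n}" if "a \<in> {1..n}" for a
    using that assms False by (auto simp: transpose_def)
  moreover have "transpose s (Suc s) a \<noteq> transpose s (Suc s) b" if "a \<noteq> b" for a b
    using that by (meson transpose_eq_imp_eq)
  ultimately show ?thesis using assms False unfolding sign_injective_def gen_act_def by simp
qed

lemma sign_injective_evalD: "set w \<subseteq> {..<n} \<Longrightarrow> 2 \<le> n \<Longrightarrow> sign_injective n (evalD w)"
proof (induction w rule: rev_induct)
  case Nil
  then show ?case by (auto simp: evalD_Nil sign_injective_def)
next
  case (snoc s w)
  then show ?case by (simp add: evalD_snoc sign_injective_gen_act)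
qed

definition inv_pairD :: "(nat \<Rightarrow> int) \<Rightarrow> nat \<Rightarrow> nat \<Rightarrow> int" where
  "inv_pairD x a b =
     (if a < b then (if x b < x a then 1 else 0) + (if x a + x b < 0 then 1 else 0) else 0)"

definition inversionsD :: "nat \<Rightarrow> (nat \<Rightarrow> int) \<Rightarrow> int" where
  "inversionsD n x = (\<Sum>p\<in>{1..n} \<times> {1..n}. inv_pairD x (fst p) (snd p))"

definition descent :: "nat \<Rightarrow> (nat \<Rightarrow> int) \<Rightarrow> bool" where
  "descent s x \<longleftrightarrow> (if s = 0 then x 1 + x 2 < 0 else x (Suc s) < x s)"

definition gen_index :: "nat \<Rightarrow> nat" where
  "gen_index s = max 1 s"

definition gen_transp :: "nat \<Rightarrow> nat \<Rightarrow> nat" where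
  "gen_transp s = transpose (gen_index s) (Suc (gen_index s))"

lemma inversionsD_int: "inversionsD n int = 0"
  unfolding inversionsD_def inv_pairD_def by (intro sum.neutral) auto

lemma inv_pairD_gen_act:
  assumes "(a, b) \<noteq> (gen_index s, Suc (gen_index s))" "(a, b) \<noteq> (Suc (gen_index s), gen_index s)"
    "1 \<le> a" "1 \<le> b"
  shows "inv_pairD (gen_act s x) a b = inv_pairD x (gen_transp s a) (gen_transp s b)"
proof (cases "s = 0")
  case True
  then have "gen_index s = 1" "gen_transp s = transpose 1 2"
    "gen_act s x = x(1 := - x 2, 2 := - x 1)"
    by (simp_all add: gen_index_def gen_transp_def gen_act_def numeral_2_eq_2)
  then show ?thesis using assms unfolding inv_pairD_def transpose_def
    by (cases "a = 1"; cases "a = 2"; cases "b = 1"; cases "b = 2") auto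
next
  case False
  then have "gen_index s = s" "gen_transp s = transpose s (Suc s)"
    "gen_act s x = x \<circ> transpose s (Suc s)"
    by (simp_all add: gen_index_def gen_transp_def gen_act_def)
  then show ?thesis using assms unfolding inv_pairD_def transpose_def by auto
qed

lemma bij_betw_gen_transp: "s < n \<Longrightarrow> 2 \<le> n \<Longrightarrow> bij_betw (gen_transp s) {1..n} {1..n}"
  by (rule bij_betw_byWitness[where f' = "gen_transp s"])
    (auto simp: gen_transp_def gen_index_def transpose_def)

lemma inversionsD_gen_act_diff:
  assumes "s < n" "2 \<le> n"
  defines "l \<equiv> gen_index s"
  shows "inversionsD n (gen_act s x)
    = inversionsD n x + (inv_pairD (gen_act s x) l (Suc l) - inv_pairD x l (Suc l))"
proof -
  define A where "A = {1..n} \<times> {1..n}"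
  define E where "E = {(l, Suc l), (Suc l, l)}"
  have "E \<subseteq> A" "finite A" using assms by (auto simp: E_def A_def gen_index_def)
  have "bij_betw (map_prod (gen_transp s) (gen_transp s)) A A"
    unfolding A_def by (intro bij_betw_map_prod bij_betw_gen_transp assms)
  from sum.reindex_bij_betw[OF this, of "\<lambda>p. inv_pairD x (fst p) (snd p)"]
  have reindex: "(\<Sum>p\<in>A. inv_pairD x (gen_transp s (fst p)) (gen_transp s (snd p)))
      = (\<Sum>p\<in>A. inv_pairD x (fst p) (snd p))"
    by (simp add: map_prod_def split_def)
  have off_E: "(\<Sum>p\<in>A - E. inv_pairD (gen_act s x) (fst p) (snd p))
      = (\<Sum>p\<in>A - E. inv_pairD x (gen_transp s (fst p)) (gen_transp s (snd p)))"
    by (intro sum.cong refl inv_pairD_gen_act) (auto simp: E_def A_def l_def)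
  have "gen_transp s l = Suc l" "gen_transp s (Suc l) = l"
    by (simp_all add: gen_transp_def l_def)
  then have on_E:
    "(\<Sum>p\<in>E. inv_pairD (gen_act s x) (fst p) (snd p)) = inv_pairD (gen_act s x) l (Suc l)"
    "(\<Sum>p\<in>E. inv_pairD x (gen_transp s (fst p)) (gen_transp s (snd p))) = inv_pairD x l (Suc l)"
    by (simp_all add: E_def inv_pairD_def)
  show ?thesis
    unfolding inversionsD_def A_def[symmetric]
    using sum.subset_diff[OF \<open>E \<subseteq> A\<close> \<open>finite A\<close>,
        of "\<lambda>p. inv_pairD (gen_act s x) (fst p) (snd p)"]
      sum.subset_diff[OF \<open>E \<subseteq> A\<close> \<open>finite A\<close>,
        of "\<lambda>p. inv_pairD x (gen_transp s (fst p)) (gen_transp s (snd p))"]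
      reindex off_E on_E
    by linarith
qed

lemma inversionsD_gen_act:
  assumes "sign_injective n x" "s < n" "2 \<le> n"
  shows "inversionsD n (gen_act s x) = inversionsD n x + (if descent s x then -1 else 1)"
proof -
  define l where "l = gen_index s"
  have "1 \<le> l" "Suc l \<le> n" using assms by (auto simp: l_def gen_index_def)
  then have "x l \<noteq> x (Suc l)" "x 1 \<noteq> - x 2"
    using assms(1,3) unfolding sign_injective_def by auto
  then have "inv_pairD (gen_act s x) l (Suc l) - inv_pairD x l (Suc l)
      = (if descent s x then -1 else 1)"
    by (cases "s = 0")
      (auto simp: inv_pairD_def gen_act_def l_def gen_index_def descent_def numeral_2_eq_2)
  then show ?thesis using inversionsD_gen_act_diff[OF assms(2,3)] by (simp add: l_def)
qed

lemma inversionsD_le_length: "set w \<subseteq> {..<n} \<Longrightarrow> 2 \<le> n \<Longrightarrow> inversionsD n (evalD w) \<le> int (length w)"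
proof (induction w rule: rev_induct)
  case (snoc s w)
  then show ?case
    using inversionsD_gen_act[OF sign_injective_evalD, of w n s]
    by (auto simp: evalD_snoc split: if_splits)
qed (simp add: evalD_Nil inversionsD_int)

section \<open>Coxeter length in D_n as an inversion count\<close>

lemma not_descent_int: "\<not> descent s int"
  by (simp add: descent_def)

lemma descent_gen_act_other:
  assumes "descent s x" "descent t x" "s \<noteq> t"
  shows "descent s (gen_act t x)"
  using assms unfolding descent_def gen_act_def transpose_def
  by (auto simp: numeral_2_eq_2 split: if_splits)

lemma descent_braid:
  assumes "descent s x" "descent t x" "dynkin_adjacent s t"
  shows "descent t (gen_act s (gen_act t x))"
  using assms unfolding descent_def gen_act_def dynkin_adjacent_def transpose_def
  by (auto simp: numeral_2_eq_2 split: if_splits)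

definition reducedD :: "nat \<Rightarrow> nat list \<Rightarrow> bool" where
  "reducedD n w \<longleftrightarrow> set w \<subseteq> {..<n} \<and> inversionsD n (evalD w) = int (length w)"

lemma reducedD_snoc:
  assumes "reducedD n (w @ [t])" "2 \<le> n"
  shows "reducedD n w" "descent t (evalD (w @ [t]))"
proof -
  have w: "set w \<subseteq> {..<n}" "t < n" using assms(1) by (auto simp: reducedD_def)
  have inj: "sign_injective n (evalD w)" "sign_injective n (evalD (w @ [t]))"
    using sign_injective_evalD w assms(2) by auto
  have "inversionsD n (evalD (w @ [t]))
      = inversionsD n (evalD w) + (if descent t (evalD w) then -1 else 1)"
    using inversionsD_gen_act[OF inj(1) w(2) assms(2)] by (simp add: evalD_snoc)
  with inversionsD_le_length[OF w(1) assms(2)] assms(1)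
  have eq: "inversionsD n (evalD w) = int (length w)"
    by (auto simp: reducedD_def split: if_splits)
  with w show "reducedD n w" by (simp add: reducedD_def)
  have "inversionsD n (evalD w)
      = inversionsD n (evalD (w @ [t])) + (if descent t (evalD (w @ [t])) then -1 else 1)"
    using inversionsD_gen_act[OF inj(2) w(2) assms(2)] by (simp add: evalD_snoc)
  with eq assms(1) show "descent t (evalD (w @ [t]))"
    by (auto simp: reducedD_def split: if_splits)
qed

lemma reducedD_equiv_snoc:
  assumes "reducedD n w" "word_equiv (relatorsD n) w (u @ [s])" "length u + 1 = length w"
    "set u \<subseteq> {..<n}" "s < n" "2 \<le> n"
  shows "reducedD n u"
proof -
  have "reducedD n (u @ [s])"
    using assms evalD_word_equiv[OF assms(2)] by (simp add: reducedD_def)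
  then show ?thesis using reducedD_snoc(1) assms(6) by blast
qed

text \<open>The exchange condition; its proof uses nothing but the Coxeter relations.\<close>
lemma reducedD_exchange:
  assumes "2 \<le> n" "reducedD n w" "s < n" "descent s (evalD w)"
  shows "\<exists>u. word_equiv (relatorsD n) w (u @ [s]) \<and> length u + 1 = length w \<and> set u \<subseteq> set w \<union> {s}"
  using assms(2-)
proof (induction w arbitrary: s rule: measure_induct_rule[of length])
  case (less w s)
  obtain w' t where w: "w = w' @ [t]"
    using less.prems(3) by (metis evalD_Nil not_descent_int rev_exhaust)
  have "reducedD n w'" and dt: "descent t (evalD w)" and t: "t < n"
    using reducedD_snoc[OF _ assms(1)] less.prems(1) w by (auto simp: reducedD_def)
  define y where "y = evalD w'"
  have y: "gen_act t (evalD w) = y" by (simp add: y_def w evalD_snoc)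
  show ?case
  proof (cases "t = s")
    case True
    then show ?thesis using w by (auto intro: word_equiv_refl)
  next
    case False
    then have "descent s y" using descent_gen_act_other[OF less.prems(3) dt] y by simp
    then obtain u where u: "word_equiv (relatorsD n) w' (u @ [s])" "length u + 1 = length w'"
      "set u \<subseteq> set w' \<union> {s}"
      using less.IH[of w' s] \<open>reducedD n w'\<close> less.prems(2) w y_def by auto
    have wu: "word_equiv (relatorsD n) w (u @ [s, t])"
      using word_equiv_snoc_cong[OF u(1), of "[t]"] w by simp
    show ?thesis
    proof (cases "dynkin_adjacent s t")
      case False
      have "word_equiv (relatorsD n) (u @ [s, t]) ((u @ [t]) @ [s])"
        using word_equiv_prefix_cong[OF word_equivD_commute[OF less.prems(2) t]]
          \<open>t \<noteq> s\<close> False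
        by simp
      then show ?thesis using wu u w by (intro exI[of _ "u @ [t]"]) (auto intro: word_equiv_trans)
    next
      case True
      have "set u \<subseteq> {..<n}" using u(3) less.prems(1,2) w by (auto simp: reducedD_def)
      then have "reducedD n u"
        using reducedD_equiv_snoc[OF \<open>reducedD n w'\<close> u(1,2)] less.prems(2) assms(1) by blast
      have "evalD u = gen_act s y" using evalD_word_equiv[OF u(1)] by (simp add: y_def evalD_snoc)
      then have "descent t (evalD u)" using descent_braid[OF less.prems(3) dt True] y by simp
      then obtain v where v: "word_equiv (relatorsD n) u (v @ [t])" "length v + 1 = length u"
        "set v \<subseteq> set u \<union> {t}"
        using less.IH[of u t] \<open>reducedD n u\<close> t u(2) w by auto
      have "word_equiv (relatorsD n) (u @ [s, t]) (v @ [t, s, t])"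
        using word_equiv_snoc_cong[OF v(1), of "[s, t]"] by simp
      moreover have "word_equiv (relatorsD n) (v @ [t, s, t]) ((v @ [s, t]) @ [s])"
        using word_equiv_prefix_cong[OF word_equiv_sym[OF word_equivD_braid[OF less.prems(2) t]]]
          True
        by simp
      ultimately show ?thesis using wu u v w
        by (intro exI[of _ "v @ [s, t]"]) (auto intro: word_equiv_trans)
    qed
  qed
qed

lemma word_equiv_reducedD:
  assumes "set w \<subseteq> {..<n}" "2 \<le> n"
  shows "\<exists>v. word_equiv (relatorsD n) w v \<and> reducedD n v \<and> set v \<subseteq> set w"
  using assms(1)
proof (induction w rule: rev_induct)
  case Nil
  show ?case by (auto simp: reducedD_def evalD_Nil inversionsD_int intro: word_equiv_refl)
next
  case (snoc s w)
  then obtain v where v: "word_equiv (relatorsD n) w v" "reducedD n v" "set v \<subseteq> set w"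
    by auto
  have s: "s < n" using snoc.prems by simp
  have wv: "word_equiv (relatorsD n) (w @ [s]) (v @ [s])"
    using word_equiv_snoc_cong[OF v(1)] .
  show ?case
  proof (cases "descent s (evalD v)")
    case False
    have "sign_injective n (evalD v)"
      using v(2) sign_injective_evalD assms(2) by (auto simp: reducedD_def)
    then have "reducedD n (v @ [s])"
      using inversionsD_gen_act[OF _ s assms(2)] v(2) s False
      by (auto simp: reducedD_def evalD_snoc)
    then show ?thesis using wv v(3) by (intro exI[of _ "v @ [s]"]) auto
  next
    case True
    then obtain u where u: "word_equiv (relatorsD n) v (u @ [s])" "length u + 1 = length v"
      "set u \<subseteq> set v \<union> {s}"
      using reducedD_exchange[OF assms(2) v(2) s] by blast
    have "set u \<subseteq> {..<n}" using u(3) v(2) s by (auto simp: reducedD_def)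
    then have "reducedD n u" using reducedD_equiv_snoc[OF v(2) u(1,2) _ s assms(2)] by blast
    moreover have "word_equiv (relatorsD n) (w @ [s]) u"
      using word_equiv_trans[OF wv word_equiv_snoc_cong[OF u(1), of "[s]"]]
        word_equiv_cancel[OF relatorsD_square[OF s], of u]
      by (auto intro: word_equiv_trans)
    ultimately show ?thesis using u(3) v(3) by auto
  qed
qed

theorem lengthD_eq_inversionsD:
  assumes "set w \<subseteq> {..<n}" "2 \<le> n"
  shows "int (lengthD n w) = inversionsD n (evalD w)"
proof -
  obtain v where v: "word_equiv (relatorsD n) w v" "reducedD n v"
    using word_equiv_reducedD[OF assms] by blast
  have "lengthD n w = length v"
    unfolding lengthD_def
  proof (rule Least_equality)
    show "\<exists>v'. set v' \<subseteq> {..<n} \<and> length v' = length v \<and> word_equiv (relatorsD n) v' w"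
      using v word_equiv_sym by (auto simp: reducedD_def)
  next
    fix l assume "\<exists>v'. set v' \<subseteq> {..<n} \<and> length v' = l \<and> word_equiv (relatorsD n) v' w"
    then obtain v' where "set v' \<subseteq> {..<n}" "length v' = l" "evalD v' = evalD w"
      using evalD_word_equiv by blast
    then show "length v \<le> l"
      using inversionsD_le_length[of v' n] evalD_word_equiv[OF v(1)] v(2) assms(2)
      by (simp add: reducedD_def)
  qed
  then show ?thesis using v evalD_word_equiv[OF v(1)] by (simp add: reducedD_def)
qed

section \<open>The symmetric group and the element w_L\<close>

lemma evalS_Nil: "evalS [] = id"
  by (simp add: evalS_def)

lemma evalS_Cons: "evalS (a # w) = transpose a (Suc a) \<circ> evalS w"
  by (simp add: evalS_def)

lemma evalS_append: "evalS (u @ v) = evalS u \<circ> evalS v"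
  by (induction u) (auto simp: evalS_Nil evalS_Cons)

lemma evalS_rev_evalS: "evalS (rev w) (evalS w j) = j"
  by (induction w arbitrary: j) (auto simp: evalS_append evalS_Cons evalS_Nil)

lemma evalS_evalS_rev: "evalS w (evalS (rev w) j) = j"
  using evalS_rev_evalS[of "rev w" j] by simp

lemma evalS_in_atLeastAtMost: "set w \<subseteq> {1..n-1} \<Longrightarrow> j \<in> {1..n} \<Longrightarrow> evalS w j \<in> {1..n}"
  by (induction w arbitrary: j) (auto simp: evalS_Cons evalS_Nil transpose_def)

lemma evalD_append_evalS: "0 \<notin> set v \<Longrightarrow> evalD (u @ v) = evalD u \<circ> evalS v"
proof -
  have "0 \<notin> set v \<Longrightarrow> foldl (\<lambda>x s. gen_act s x) x v = x \<circ> evalS v" for x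
    by (induction v arbitrary: x) (auto simp: gen_act_def evalS_Nil evalS_Cons comp_assoc)
  then show "0 \<notin> set v \<Longrightarrow> evalD (u @ v) = evalD u \<circ> evalS v"
    by (simp add: evalD_def)
qed

lemma evalD_eq_evalS: "0 \<notin> set w \<Longrightarrow> evalD w = int \<circ> evalS w"
  using evalD_append_evalS[of w "[]"] by (simp add: evalD_Nil)

theorem lengthS_eq_inversionsD:
  assumes "set w \<subseteq> {1..n-1}" "2 \<le> n"
  shows "int (lengthS n (evalS w)) = inversionsD n (evalD w)"
proof -
  have w: "set w \<subseteq> {..<n}" "0 \<notin> set w" using assms by force+
  obtain v where v: "word_equiv (relatorsD n) w v" "reducedD n v" "set v \<subseteq> set w"
    using word_equiv_reducedD[OF w(1) assms(2)] by blast
  have "0 \<notin> set v" using v(3) w(2) by blast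
  then have "int \<circ> evalS v = int \<circ> evalS w"
    using evalD_word_equiv[OF v(1)] evalD_eq_evalS w(2) by metis
  then have evalS_v: "evalS v = evalS w"
    by (simp add: fun_eq_iff)
  have "lengthS n (evalS w) = length v"
    unfolding lengthS_def
  proof (rule Least_equality)
    show "\<exists>v'. set v' \<subseteq> {1..n-1} \<and> length v' = length v \<and> evalS v' = evalS w"
      using v(3) evalS_v assms(1) by blast
  next
    fix l assume "\<exists>v'. set v' \<subseteq> {1..n-1} \<and> length v' = l \<and> evalS v' = evalS w"
    then obtain v' where v': "set v' \<subseteq> {1..n-1}" "length v' = l" "evalS v' = evalS w"
      by blast
    then have "set v' \<subseteq> {..<n}" "evalD v' = evalD w"
      using assms w(2) evalD_eq_evalS[of v'] evalD_eq_evalS[of w] by force+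
    then show "length v \<le> l"
      using inversionsD_le_length[of v' n] v(2) v'(2) evalD_word_equiv[OF v(1)] assms(2)
      by (simp add: reducedD_def)
  qed
  then show ?thesis using v(2) evalD_word_equiv[OF v(1)] by (simp add: reducedD_def)
qed

lemma evalS_upt:
  "a \<le> b \<Longrightarrow> evalS [a..<b] = (\<lambda>j. if a \<le> j \<and> j < b then Suc j else if j = b then a else j)"
proof (induction b)
  case (Suc b)
  then show ?case
    by (cases "a = Suc b") (auto simp: evalS_append evalS_Cons evalS_Nil transpose_def fun_eq_iff)
qed (auto simp: evalS_Nil)

lemma evalS_rev_upt:
  "a \<le> b \<Longrightarrow> evalS (rev [a..<b]) = (\<lambda>j. if a < j \<and> j \<le> b then j - 1 else if j = a then b else j)"
proof (induction b)
  case (Suc b)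
  then show ?case
    by (cases "a = Suc b") (auto simp: evalS_append evalS_Cons evalS_Nil transpose_def fun_eq_iff)
qed (auto simp: evalS_Nil)

definition wL_signed_perm :: "nat \<Rightarrow> nat \<Rightarrow> int" where
  "wL_signed_perm L j = (if j = 1 \<or> j = Suc L then - int j else int j)"

lemma evalD_wL_word: "1 \<le> L \<Longrightarrow> evalD (wL_word L) = wL_signed_perm L"
proof -
  assume "1 \<le> L"
  have "evalD (wL_word L) = gen_act 0 (int \<circ> evalS (rev [1..<Suc L])) \<circ> evalS [2..<Suc L]"
    unfolding wL_word_def
    using evalD_append_evalS[of "[2..<Suc L]" "rev [1..<Suc L] @ [0]"]
    by (simp add: evalD_snoc evalD_eq_evalS)
  also have "\<dots>
      = gen_act 0 (\<lambda>j. int (if 1 < j \<and> j \<le> Suc L then j - 1 else if j = 1 then Suc L else j))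
      \<circ> (\<lambda>j. if 2 \<le> j \<and> j < Suc L then Suc j else if j = Suc L then 2 else j)"
    using \<open>1 \<le> L\<close> evalS_rev_upt[of 1 "Suc L"] evalS_upt[of 2 "Suc L"] by (simp add: comp_def)
  finally have e: "evalD (wL_word L) = \<dots>" .
  show ?thesis
  proof
    fix j
    consider "j = 0" | "j = 1" | "2 \<le> j" "j \<le> L" | "j = Suc L" | "Suc L < j" by linarith
    then show "evalD (wL_word L) j = wL_signed_perm L j"
      by cases (use e \<open>1 \<le> L\<close> in \<open>simp_all add: gen_act_def wL_signed_perm_def\<close>)
  qed
qed

lemma inversionsD_wL_signed_perm:
  fixes \<sigma> \<sigma>' :: "nat \<Rightarrow> nat"
  assumes \<sigma>: "\<And>j. j \<in> {1..n} \<Longrightarrow> \<sigma> j \<in> {1..n}" and \<sigma>': "\<And>j. j \<in> {1..n} \<Longrightarrow> \<sigma>' j \<in> {1..n}"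
    and inv: "\<And>j. \<sigma>' (\<sigma> j) = j" and inv': "\<And>j. \<sigma> (\<sigma>' j) = j"
    and L: "1 \<le> L" "Suc L \<le> n"
  shows "inversionsD n (\<lambda>j. wL_signed_perm L (\<sigma> j))
    = inversionsD n (\<lambda>j. int (\<sigma> j)) + 2 * int (card {u\<in>{1..L}. \<sigma>' u < \<sigma>' (Suc L)})"
proof -
  define q where "q = \<sigma>' (Suc L)"
  have q: "q \<in> {1..n}" "\<sigma> q = Suc L" using \<sigma>' L by (auto simp: q_def inv')
  define A where "A = {1..n} \<times> {1..n}"
  define P where "P = (\<lambda>p::nat \<times> nat. fst p < snd p \<and> \<sigma> (snd p) = Suc L \<and> \<sigma> (fst p) \<le> L)"
  have pair: "inv_pairD (\<lambda>j. wL_signed_perm L (\<sigma> j)) (fst p) (snd p)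
      = inv_pairD (\<lambda>j. int (\<sigma> j)) (fst p) (snd p) + (if P p then 2 else 0)" if "p \<in> A" for p
  proof -
    obtain a b where p: "p = (a, b)" by force
    have "a \<noteq> b \<Longrightarrow> \<sigma> a \<noteq> \<sigma> b" using inv by metis
    moreover have "1 \<le> \<sigma> a" "1 \<le> \<sigma> b" using \<sigma> that p A_def by auto
    ultimately show ?thesis unfolding p P_def inv_pairD_def wL_signed_perm_def by auto
  qed
  have "inversionsD n (\<lambda>j. wL_signed_perm L (\<sigma> j))
      = (\<Sum>p\<in>A. inv_pairD (\<lambda>j. int (\<sigma> j)) (fst p) (snd p) + (if P p then 2 else 0))"
    unfolding inversionsD_def A_def[symmetric] using pair by (intro sum.cong) auto
  also have "\<dots> = inversionsD n (\<lambda>j. int (\<sigma> j)) + (\<Sum>p\<in>{p\<in>A. P p}. 2)"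
    unfolding inversionsD_def A_def[symmetric]
    by (simp add: sum.distrib sum.inter_filter[symmetric] A_def)
  also have "{p\<in>A. P p} = {a\<in>{1..n}. a < q \<and> \<sigma> a \<le> L} \<times> {q}"
  proof -
    have "\<sigma> b = Suc L \<longleftrightarrow> b = q" if "b \<in> {1..n}" for b using q inv by metis
    then show ?thesis unfolding A_def P_def using q by auto
  qed
  also have "(\<Sum>p\<in>{a\<in>{1..n}. a < q \<and> \<sigma> a \<le> L} \<times> {q}. 2::int)
      = 2 * int (card {a\<in>{1..n}. a < q \<and> \<sigma> a \<le> L})"
    by (simp add: card_cartesian_product)
  also have "card {a\<in>{1..n}. a < q \<and> \<sigma> a \<le> L} = card {u\<in>{1..L}. \<sigma>' u < q}"
  proof (rule bij_betw_same_card[symmetric], rule bij_betw_byWitness[where f' = \<sigma>])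
    show "\<forall>u\<in>{u\<in>{1..L}. \<sigma>' u < q}. \<sigma> (\<sigma>' u) = u" using inv' by simp
    show "\<forall>a\<in>{a\<in>{1..n}. a < q \<and> \<sigma> a \<le> L}. \<sigma>' (\<sigma> a) = a" using inv by simp
    show "\<sigma>' ` {u\<in>{1..L}. \<sigma>' u < q} \<subseteq> {a\<in>{1..n}. a < q \<and> \<sigma> a \<le> L}"
      using \<sigma>' L inv' by auto
    show "\<sigma> ` {a\<in>{1..n}. a < q \<and> \<sigma> a \<le> L} \<subseteq> {u\<in>{1..L}. \<sigma>' u < q}"
      using \<sigma> inv by auto
  qed
  finally show ?thesis by (simp add: q_def)
qed

theorem lengthD_wL_word_append:
  assumes "set w \<subseteq> {1..n-1}" "2 \<le> n" "1 \<le> L" "L \<le> n - 1"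
  shows "int (lengthD n (wL_word L @ w)) = int (lengthS n (evalS w))
     + 2 * int (card {u\<in>{1..L}. evalS (rev w) u < evalS (rev w) (Suc L)})"
proof -
  have w: "0 \<notin> set w" "set w \<subseteq> {..<n}" using assms(1,2) by force+
  have "set (wL_word L @ w) \<subseteq> {..<n}" using assms w(2) unfolding wL_word_def by auto
  moreover have "evalD (wL_word L @ w) = (\<lambda>j. wL_signed_perm L (evalS w j))"
    using evalD_append_evalS[OF w(1)] evalD_wL_word[OF assms(3)] by (simp add: comp_def)
  moreover have "evalD w = (\<lambda>j. int (evalS w j))" using evalD_eq_evalS[OF w(1)] by auto
  moreover have "inversionsD n (\<lambda>j. wL_signed_perm L (evalS w j))
      = inversionsD n (\<lambda>j. int (evalS w j))
      + 2 * int (card {u\<in>{1..L}. evalS (rev w) u < evalS (rev w) (Suc L)})"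
    by (rule inversionsD_wL_signed_perm[OF evalS_in_atLeastAtMost[OF assms(1)]
          evalS_in_atLeastAtMost[of "rev w"]])
      (use assms evalS_rev_evalS evalS_evalS_rev in auto)
  ultimately show ?thesis
    using lengthD_eq_inversionsD[OF _ assms(2)] lengthS_eq_inversionsD[OF assms(1,2)] by simp
qed

section \<open>The OGS element\<close>

definition cycle_down :: "nat \<Rightarrow> nat \<Rightarrow> nat" where
  "cycle_down K j = (if 1 < j \<and> j \<le> K then j - 1 else if j = 1 then K else j)"

lemma evalS_rev_t_word: "1 \<le> K \<Longrightarrow> evalS (rev (t_word K)) = cycle_down K"
  unfolding t_word_def cycle_down_def using evalS_rev_upt[of 1 K] by simp

lemma evalS_concat_replicate: "evalS (concat (replicate c w)) = evalS w ^^ c"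
  by (induction c) (auto simp: evalS_append evalS_Nil)

lemma cycle_down_pow_le:
  "c \<le> K \<Longrightarrow> 1 \<le> j \<Longrightarrow> j \<le> K \<Longrightarrow> (cycle_down K ^^ c) j = (if c < j then j - c else j + K - c)"
  by (induction c) (auto simp: cycle_down_def)

lemma cycle_down_pow_gt: "1 \<le> K \<Longrightarrow> K < j \<Longrightarrow> (cycle_down K ^^ c) j = j"
  by (induction c) (auto simp: cycle_down_def)

lemma ogs_word_0: "ogs_word 0 k i = []"
  by (simp add: ogs_word_def)

lemma ogs_word_Suc:
  "ogs_word (Suc p) k i = ogs_word p k i @ concat (replicate (i (Suc p)) (t_word (k (Suc p))))"
  by (simp add: ogs_word_def)

lemma evalS_rev_ogs_word_Suc:
  "1 \<le> k (Suc p) \<Longrightarrow> evalS (rev (ogs_word (Suc p) k i))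
     = (cycle_down (k (Suc p)) ^^ i (Suc p)) \<circ> evalS (rev (ogs_word p k i))"
  by (simp add: ogs_word_Suc evalS_append rev_concat evalS_concat_replicate evalS_rev_t_word)

text \<open>Here i j stands for the exponent i_{k_j} of the paper, so M = exp_sum m.\<close>
locale ogs_exponents =
  fixes m :: nat and k i :: "nat \<Rightarrow> nat"
  assumes k_less_Suc: "\<And>j. 1 \<le> j \<Longrightarrow> j < m \<Longrightarrow> k j < k (Suc j)"
    and i_bounds: "\<And>j. 1 \<le> j \<Longrightarrow> j \<le> m \<Longrightarrow> 1 \<le> i j \<and> i j \<le> k j - 1"
    and sum_i_le: "(\<Sum>j=1..m. i j) \<le> k 1"
begin

definition exp_sum :: "nat \<Rightarrow> nat" where
  "exp_sum p = (\<Sum>j=1..p. i j)"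

definition exp_sum_ge :: "nat \<Rightarrow> nat \<Rightarrow> nat" where
  "exp_sum_ge p y = (\<Sum>j\<in>{j\<in>{1..p}. y \<le> k j}. i j)"

definition exp_block :: "nat \<Rightarrow> nat set" where
  "exp_block j = {exp_sum (j - 1)<..exp_sum j}"

definition ogs_inv :: "nat \<Rightarrow> nat \<Rightarrow> nat" where
  "ogs_inv p = evalS (rev (ogs_word p k i))"

definition ogs_count :: "nat \<Rightarrow> nat" where
  "ogs_count L = card {u\<in>{1..L}. ogs_inv m u < ogs_inv m (Suc L)}"

lemma k_less: "1 \<le> a \<Longrightarrow> a < b \<Longrightarrow> b \<le> m \<Longrightarrow> k a < k b"
proof (induction b)
  case (Suc b)
  then show ?case using k_less_Suc[of b] by (cases "a = b") auto
qed simp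

lemma k_mono: "1 \<le> a \<Longrightarrow> a \<le> b \<Longrightarrow> b \<le> m \<Longrightarrow> k a \<le> k b"
  using k_less by (cases "a = b") (auto intro: less_imp_le)

lemma set_ogs_word: "set (ogs_word m k i) \<subseteq> {1..<k m}"
proof
  fix x assume "x \<in> set (ogs_word m k i)"
  then obtain j where "1 \<le> j" "j \<le> m" "x \<in> set (t_word (k j))"
    unfolding ogs_word_def by (auto simp: set_replicate_conv_if split: if_splits)
  then show "x \<in> {1..<k m}" using k_mono[of j m] by (auto simp: t_word_def)
qed

lemma lengthD_wL_ogs_word:
  assumes "1 \<le> m" "2 \<le> k 1" "k m \<le> n" "1 \<le> L" "L \<le> n - 1"
  shows "int (lengthD n (wL_word L @ ogs_word m k i))
    = int (lengthS n (evalS (ogs_word m k i))) + 2 * int (ogs_count L)"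
proof -
  have "k 1 \<le> k m" using k_mono[of 1 m] assms(1) by simp
  then have "set (ogs_word m k i) \<subseteq> {1..n-1}" "2 \<le> n"
    using set_ogs_word assms(2,3) by force+
  from lengthD_wL_word_append[OF this assms(4,5)] show ?thesis
    by (simp add: ogs_count_def ogs_inv_def)
qed

lemma exp_sum_mono: "a \<le> b \<Longrightarrow> exp_sum a \<le> exp_sum b"
  unfolding exp_sum_def by (intro sum_mono2) auto

lemma exp_sum_Suc: "exp_sum (Suc j) = exp_sum j + i (Suc j)"
  unfolding exp_sum_def by simp

lemma exp_sum_split: "r \<le> p \<Longrightarrow> exp_sum p = exp_sum r + (\<Sum>j=Suc r..p. i j)"
proof -
  assume "r \<le> p"
  then have "{1..p} = {1..r} \<union> {Suc r..p}" by auto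
  then show ?thesis unfolding exp_sum_def by (simp add: sum.union_disjoint)
qed

lemma exp_sum_le_k: "1 \<le> j \<Longrightarrow> j \<le> m \<Longrightarrow> exp_sum m \<le> k j"
  using sum_i_le k_mono[of 1 j] unfolding exp_sum_def by linarith

lemma exp_sum_ge_le: "exp_sum_ge p y \<le> exp_sum p"
  unfolding exp_sum_ge_def exp_sum_def by (intro sum_mono2) auto

lemma exp_sum_ge_antimono: "y \<le> y' \<Longrightarrow> exp_sum_ge p y' \<le> exp_sum_ge p y"
  unfolding exp_sum_ge_def by (intro sum_mono2) auto

lemma exp_sum_ge_Suc:
  "exp_sum_ge (Suc p) y = (if y \<le> k (Suc p) then exp_sum_ge p y + i (Suc p) else exp_sum_ge p y)"
proof -
  have "{j\<in>{1..Suc p}. y \<le> k j}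
      = (if y \<le> k (Suc p) then insert (Suc p) {j\<in>{1..p}. y \<le> k j} else {j\<in>{1..p}. y \<le> k j})"
    by (auto simp: le_Suc_eq)
  then show ?thesis unfolding exp_sum_ge_def by auto
qed

lemma exp_sum_ge_eq_exp_sum: "p \<le> m \<Longrightarrow> y \<le> k 1 \<Longrightarrow> exp_sum_ge p y = exp_sum p"
proof -
  assume "p \<le> m" "y \<le> k 1"
  then have "{j\<in>{1..p}. y \<le> k j} = {1..p}" using k_mono[of 1] by force
  then show ?thesis unfolding exp_sum_ge_def exp_sum_def by simp
qed

lemma exp_sum_ge_eq_0: "(\<And>j. 1 \<le> j \<Longrightarrow> j \<le> p \<Longrightarrow> k j < y) \<Longrightarrow> exp_sum_ge p y = 0"
  unfolding exp_sum_ge_def by (force intro: sum.neutral)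

lemma exp_sum_ge_eq_sum_from:
  assumes "1 \<le> r" "r < m" "k r < y" "y \<le> k (Suc r)"
  shows "exp_sum_ge m y = (\<Sum>j=Suc r..m. i j)"
proof -
  have "{j\<in>{1..m}. y \<le> k j} = {Suc r..m}"
    using assms k_mono[of _ r] k_mono[of "Suc r"] by (force simp: not_less_eq_eq)
  then show ?thesis unfolding exp_sum_ge_def by simp
qed

lemma exp_sum_ge_le_above_block:
  assumes "1 \<le> j" "j \<le> m" "k j < y"
  shows "exp_sum_ge m y + exp_sum j \<le> exp_sum m"
proof -
  have "{j'\<in>{1..m}. y \<le> k j'} \<subseteq> {Suc j..m}"
    using assms k_mono[of _ j] by (force simp: not_less_eq_eq)
  then have "exp_sum_ge m y \<le> (\<Sum>j'=Suc j..m. i j')"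
    unfolding exp_sum_ge_def by (intro sum_mono2) auto
  then show ?thesis using exp_sum_split[OF assms(2)] by linarith
qed

lemma exp_sum_ge_ge_from_block:
  assumes "1 \<le> j" "j \<le> m" "y \<le> k j"
  shows "exp_sum m \<le> exp_sum_ge m y + exp_sum (j - 1)"
proof -
  have "{j..m} \<subseteq> {j'\<in>{1..m}. y \<le> k j'}"
    using assms k_mono[of j] by force
  then have "(\<Sum>j'=j..m. i j') \<le> exp_sum_ge m y"
    unfolding exp_sum_ge_def by (intro sum_mono2) auto
  then show ?thesis using exp_sum_split[of "j - 1" m] assms by simp
qed

lemma card_exp_block: "1 \<le> j \<Longrightarrow> card (exp_block j) = i j"
  using exp_sum_Suc[of "j - 1"] by (simp add: exp_block_def)

lemma exp_block_disjoint: "j < j' \<Longrightarrow> exp_block j \<inter> exp_block j' = {}"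
proof -
  assume "j < j'"
  then have "exp_sum j \<le> exp_sum (j' - 1)" by (intro exp_sum_mono) simp
  then show ?thesis by (auto simp: exp_block_def)
qed

lemma exp_block_exists: "1 \<le> y \<Longrightarrow> y \<le> exp_sum p \<Longrightarrow> \<exists>j. 1 \<le> j \<and> j \<le> p \<and> y \<in> exp_block j"
proof (induction p)
  case (Suc p)
  then show ?case
    by (cases "y \<le> exp_sum p") (force simp: exp_block_def le_Suc_eq)+
qed (simp add: exp_sum_def)

lemma exp_block_le_exp_sum: "j \<le> p \<Longrightarrow> u \<in> exp_block j \<Longrightarrow> u \<le> exp_sum p"
  using exp_sum_mono[of j p] by (auto simp: exp_block_def)

lemma ogs_inv_0: "ogs_inv 0 = id"
  by (simp add: ogs_inv_def ogs_word_0 evalS_Nil)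

lemma ogs_inv_Suc:
  "p < m \<Longrightarrow> ogs_inv (Suc p) y = (cycle_down (k (Suc p)) ^^ i (Suc p)) (ogs_inv p y)"
proof -
  assume "p < m"
  then have "1 \<le> k (Suc p)" using i_bounds[of "Suc p"] by linarith
  then show ?thesis using evalS_rev_ogs_word_Suc[of k p i] by (simp add: ogs_inv_def)
qed

lemma ogs_inv_above: "p \<le> m \<Longrightarrow> exp_sum p < y \<Longrightarrow> ogs_inv p y = y - exp_sum_ge p y"
proof (induction p)
  case 0
  then show ?case by (simp add: ogs_inv_0 exp_sum_ge_def)
next
  case (Suc p)
  define K I where "K = k (Suc p)" and "I = i (Suc p)"
  have I: "1 \<le> I" "I \<le> K - 1" using i_bounds[of "Suc p"] Suc.prems by (auto simp: I_def K_def)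
  have IH: "ogs_inv p y = y - exp_sum_ge p y"
    using Suc exp_sum_Suc[of p] by simp
  have "exp_sum p + I < y" using Suc.prems exp_sum_Suc[of p] by (simp add: I_def)
  show ?case
  proof (cases "y \<le> K")
    case True
    then have "I < ogs_inv p y" "ogs_inv p y \<le> K"
      using IH exp_sum_ge_le[of p y] \<open>exp_sum p + I < y\<close> by linarith+
    then show ?thesis
      using ogs_inv_Suc[of p y] Suc.prems IH True exp_sum_ge_Suc[of p y] cycle_down_pow_le[of I K] I
      by (simp add: K_def I_def)
  next
    case False
    then have "exp_sum_ge p y = 0"
      using k_less[of _ "Suc p"] Suc.prems by (intro exp_sum_ge_eq_0) (fastforce simp: K_def)
    then show ?thesis
      using ogs_inv_Suc[of p y] Suc.prems IH False exp_sum_ge_Suc[of p y]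
        cycle_down_pow_gt[of K y I] I
      by (simp add: K_def I_def)
  qed
qed

lemma ogs_inv_block:
  "1 \<le> j \<Longrightarrow> j \<le> p \<Longrightarrow> p \<le> m \<Longrightarrow> y \<in> exp_block j \<Longrightarrow> ogs_inv p y = y + k j - exp_sum p"
proof (induction p)
  case (Suc p)
  define K I where "K = k (Suc p)" and "I = i (Suc p)"
  have I: "1 \<le> I" "I \<le> K - 1" using i_bounds[of "Suc p"] Suc.prems by (auto simp: I_def K_def)
  have exp_sum_Suc_p: "exp_sum (Suc p) = exp_sum p + I" by (simp add: exp_sum_Suc I_def)
  have "exp_sum (Suc p) \<le> exp_sum m" using Suc.prems exp_sum_mono by blast
  have y: "exp_sum (j - 1) < y" "y \<le> exp_sum j" using Suc.prems by (auto simp: exp_block_def)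
  show ?case
  proof (cases "j \<le> p")
    case True
    have IH: "ogs_inv p y = y + k j - exp_sum p" using Suc True by simp
    have "exp_sum j \<le> exp_sum p" "exp_sum m \<le> k j" "k j < K"
      using True Suc.prems exp_sum_mono exp_sum_le_k k_less[of j "Suc p"] by (auto simp: K_def)
    then have "I < ogs_inv p y" "ogs_inv p y \<le> K"
      using IH y exp_sum_Suc_p \<open>exp_sum (Suc p) \<le> exp_sum m\<close> by linarith+
    then show ?thesis
      using ogs_inv_Suc[of p y] Suc.prems IH cycle_down_pow_le[of I K] I exp_sum_Suc_p
      by (simp add: K_def I_def)
  next
    case False
    then have j: "j = Suc p" using Suc.prems by simp
    have "exp_sum_ge p y = exp_sum p"
      using exp_sum_ge_eq_exp_sum[of p y] y j Suc.prems \<open>exp_sum (Suc p) \<le> exp_sum m\<close> sum_i_le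
      by (simp add: exp_sum_def)
    then have "ogs_inv p y = y - exp_sum p" "1 \<le> ogs_inv p y" "ogs_inv p y \<le> I"
      using ogs_inv_above[of p y] y j Suc.prems exp_sum_Suc_p by simp_all
    then show ?thesis
      using ogs_inv_Suc[of p y] Suc.prems cycle_down_pow_le[of I K] I exp_sum_Suc_p y j
      by (simp add: K_def I_def)
  qed
qed simp

lemma ogs_inv_less_iff_block:
  assumes "exp_sum m \<le> L" "1 \<le> j" "j \<le> m" "u \<in> exp_block j"
  shows "ogs_inv m u < ogs_inv m (Suc L) \<longleftrightarrow> k j \<le> L"
proof -
  have F_L: "ogs_inv m (Suc L) = Suc L - exp_sum_ge m (Suc L)"
    using ogs_inv_above assms(1) by simp
  have F_u: "ogs_inv m u = u + k j - exp_sum m"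
    using ogs_inv_block assms(2-4) by simp
  have u: "exp_sum (j - 1) < u" "u \<le> exp_sum j" using assms(4) by (auto simp: exp_block_def)
  have "exp_sum m \<le> k j" "exp_sum_ge m (Suc L) \<le> exp_sum m"
    using exp_sum_le_k assms(2,3) exp_sum_ge_le by auto
  show ?thesis
  proof (cases "k j \<le> L")
    case True
    then have "exp_sum_ge m (Suc L) + exp_sum j \<le> exp_sum m"
      using exp_sum_ge_le_above_block assms(2,3) by simp
    then show ?thesis using True F_L F_u u \<open>exp_sum m \<le> k j\<close> by linarith
  next
    case False
    then have "exp_sum m \<le> exp_sum_ge m (Suc L) + exp_sum (j - 1)"
      using exp_sum_ge_ge_from_block assms(2,3) by simp
    then show ?thesis using False F_L F_u u \<open>exp_sum m \<le> k j\<close> assms(1) by linarith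
  qed
qed

lemma ogs_inv_less_above:
  assumes "exp_sum m < u" "u \<le> L"
  shows "ogs_inv m u < ogs_inv m (Suc L)"
proof -
  have "ogs_inv m u = u - exp_sum_ge m u" "ogs_inv m (Suc L) = Suc L - exp_sum_ge m (Suc L)"
    using ogs_inv_above assms by auto
  moreover have "exp_sum_ge m (Suc L) \<le> exp_sum_ge m u"
    using exp_sum_ge_antimono assms(2) by simp
  moreover have "exp_sum_ge m (Suc L) \<le> exp_sum m" by (rule exp_sum_ge_le)
  ultimately show ?thesis using assms by linarith
qed

lemma ogs_count_below:
  assumes "L < exp_sum m"
  shows "ogs_count L = L"
proof -
  obtain j0 where j0: "1 \<le> j0" "j0 \<le> m" "Suc L \<in> exp_block j0"
    using exp_block_exists[of "Suc L" m] assms by auto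
  have "ogs_inv m u < ogs_inv m (Suc L)" if u: "u \<in> {1..L}" for u
  proof -
    obtain j where j: "1 \<le> j" "j \<le> m" "u \<in> exp_block j"
      using exp_block_exists[of u m] u assms by auto
    have "j \<le> j0"
    proof (rule ccontr)
      assume "\<not> j \<le> j0"
      then have "exp_sum j0 \<le> exp_sum (j - 1)" by (intro exp_sum_mono) simp
      then show False using j j0 u by (auto simp: exp_block_def)
    qed
    then have "k j \<le> k j0" using k_mono j(1) j0(2) by simp
    moreover have "exp_sum m \<le> k j" "u \<le> L" using exp_sum_le_k j u by simp_all
    ultimately show ?thesis
      using ogs_inv_block[OF j(1,2) order.refl j(3)] ogs_inv_block[OF j0(1,2) order.refl j0(3)] u
      by linarith
  qed
  then have "{u\<in>{1..L}. ogs_inv m u < ogs_inv m (Suc L)} = {1..L}" by auto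
  then show ?thesis by (simp add: ogs_count_def)
qed

lemma ogs_count_above:
  assumes "exp_sum m \<le> L"
  shows "ogs_count L + exp_sum_ge m (Suc L) = L"
proof -
  define J where "J = {j\<in>{1..m}. k j \<le> L}"
  have set_eq: "{u\<in>{1..L}. ogs_inv m u < ogs_inv m (Suc L)} = (\<Union>j\<in>J. exp_block j) \<union> {exp_sum m<..L}"
  proof (intro set_eqI iffI)
    fix u assume u: "u \<in> {u\<in>{1..L}. ogs_inv m u < ogs_inv m (Suc L)}"
    show "u \<in> (\<Union>j\<in>J. exp_block j) \<union> {exp_sum m<..L}"
    proof (cases "exp_sum m < u")
      case False
      then obtain j where "1 \<le> j" "j \<le> m" "u \<in> exp_block j"
        using exp_block_exists[of u m] u by auto
      then show ?thesis using u ogs_inv_less_iff_block[OF assms] by (auto simp: J_def)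
    qed (use u in auto)
  next
    fix u assume "u \<in> (\<Union>j\<in>J. exp_block j) \<union> {exp_sum m<..L}"
    then show "u \<in> {u\<in>{1..L}. ogs_inv m u < ogs_inv m (Suc L)}"
    proof
      assume "u \<in> (\<Union>j\<in>J. exp_block j)"
      then obtain j where j: "j \<in> J" "u \<in> exp_block j" by blast
      then have "1 \<le> u" "u \<le> L"
        using exp_block_le_exp_sum[of j m u] assms by (auto simp: J_def exp_block_def)
      then show ?thesis using j ogs_inv_less_iff_block[OF assms] by (auto simp: J_def)
    qed (use ogs_inv_less_above in auto)
  qed
  have card_blocks: "card (\<Union>j\<in>J. exp_block j) = (\<Sum>j\<in>J. i j)"
  proof (subst card_UN_disjoint)
    show "\<forall>j\<in>J. \<forall>j'\<in>J. j \<noteq> j' \<longrightarrow> exp_block j \<inter> exp_block j' = {}"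
      using exp_block_disjoint by (metis Int_commute linorder_neq_iff)
    show "(\<Sum>j\<in>J. card (exp_block j)) = (\<Sum>j\<in>J. i j)"
      by (intro sum.cong) (auto simp: J_def card_exp_block)
  qed (auto simp: J_def exp_block_def)
  have "finite (\<Union>j\<in>J. exp_block j)" by (simp add: J_def exp_block_def)
  moreover have "(\<Union>j\<in>J. exp_block j) \<inter> {exp_sum m<..L} = {}"
    using exp_block_le_exp_sum by (fastforce simp: J_def)
  ultimately have "card {u\<in>{1..L}. ogs_inv m u < ogs_inv m (Suc L)} = (\<Sum>j\<in>J. i j) + (L - exp_sum m)"
    unfolding set_eq using card_blocks by (simp add: card_Un_disjoint)
  moreover have "exp_sum m = (\<Sum>j\<in>J \<union> {j\<in>{1..m}. Suc L \<le> k j}. i j)"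
    unfolding exp_sum_def by (intro sum.cong) (auto simp: J_def)
  then have "exp_sum m = (\<Sum>j\<in>J. i j) + exp_sum_ge m (Suc L)"
    unfolding exp_sum_ge_def by (subst (asm) sum.union_disjoint) (auto simp: J_def)
  ultimately show ?thesis using assms unfolding ogs_count_def by linarith
qed

lemma ogs_count_small:
  "exp_sum m \<le> L \<Longrightarrow> L < k 1 \<Longrightarrow> ogs_count L + exp_sum m = L"
  using ogs_count_above[of L] exp_sum_ge_eq_exp_sum[of m "Suc L"] by simp

lemma ogs_count_between:
  assumes "1 \<le> r" "r \<le> m - 1" "k r \<le> L" "L < k (Suc r)"
  shows "ogs_count L + (\<Sum>j=Suc r..m. i j) = L"
proof -
  have "r < m" using assms(1,2) by linarith
  moreover have "exp_sum m \<le> L" using exp_sum_le_k[of r] assms(1,3) \<open>r < m\<close> by simp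
  ultimately show ?thesis
    using ogs_count_above[of L] exp_sum_ge_eq_sum_from[of r "Suc L"] assms by simp
qed

lemma ogs_count_beyond:
  assumes "1 \<le> m" "k m \<le> L"
  shows "ogs_count L = L"
proof -
  have "exp_sum m \<le> L" using exp_sum_le_k[of m] assms by simp
  moreover have "exp_sum_ge m (Suc L) = 0"
    using k_mono[of _ m] assms(2) by (intro exp_sum_ge_eq_0) fastforce
  ultimately show ?thesis using ogs_count_above[of L] by simp
qed

end

theorem mainTheorem14:
  fixes n m L :: nat and k i :: "nat \<Rightarrow> nat"
  assumes "m \<ge> 1"
    and "2 \<le> k 1"
    and "\<And>j. 1 \<le> j \<Longrightarrow> j < m \<Longrightarrow> k j < k (Suc j)"
    and "k m \<le> n"
    and "\<And>j. 1 \<le> j \<Longrightarrow> j \<le> m \<Longrightarrow> 1 \<le> i j \<and> i j \<le> k j - 1"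
    and "(\<Sum>j=1..m. i j) \<le> k 1"
    and "1 \<le> L" and "L \<le> n - 1"
  defines "M \<equiv> (\<Sum>j=1..m. i j)"
    and "lpi \<equiv> lengthD n (wL_word L @ ogs_word m k i)"
    and "lpi' \<equiv> lengthS n (evalS (ogs_word m k i))"
  shows "(L < M \<longrightarrow> lpi = 2 * L + lpi')
       \<and> (L = M \<and> M < k 1 \<longrightarrow> lpi = lpi')
       \<and> (M < L \<and> L < k 1 \<longrightarrow> int lpi = 2 * (int L - int M) + int lpi')
       \<and> (\<forall>r. 1 \<le> r \<and> r \<le> m - 1 \<and> k r \<le> L \<and> L < k (Suc r) \<longrightarrow>
             int lpi = 2 * (int L - int (\<Sum>j=Suc r..m. i j)) + int lpi')
       \<and> (L \<ge> k m \<longrightarrow> lpi = 2 * L + lpi')"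
proof -
  interpret ogs_exponents m k i
    using assms(3,5,6) by unfold_locales auto
  have M: "M = exp_sum m" by (simp add: M_def exp_sum_def)
  have lpi: "int lpi = int lpi' + 2 * int (ogs_count L)"
    using lengthD_wL_ogs_word assms(1,2,4,7,8) by (simp add: lpi_def lpi'_def)
  show ?thesis
  proof (intro conjI impI allI)
    show "lpi = 2 * L + lpi'" if "L < M"
      using lpi ogs_count_below[of L] that by (simp add: M)
    show "lpi = lpi'" if "L = M \<and> M < k 1"
      using lpi ogs_count_small[of L] that by (simp add: M)
    show "int lpi = 2 * (int L - int M) + int lpi'" if "M < L \<and> L < k 1"
    proof -
      have "ogs_count L + M = L" using ogs_count_small[of L] that by (simp add: M)
      then show ?thesis using lpi by (auto simp: algebra_simps)
    qed
    show "int lpi = 2 * (int L - int (\<Sum>j=Suc r..m. i j)) + int lpi'"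
      if "1 \<le> r \<and> r \<le> m - 1 \<and> k r \<le> L \<and> L < k (Suc r)" for r
    proof -
      have "ogs_count L + (\<Sum>j=Suc r..m. i j) = L" using ogs_count_between[of r L] that by simp
      then show ?thesis using lpi by (auto simp: algebra_simps simp del: of_nat_sum)
    qed
    show "lpi = 2 * L + lpi'" if "k m \<le> L"
      using lpi ogs_count_beyond[of L] assms(1) that by simp
  qed
qed

end
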